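(* Let $a_0,a_1,a_2,a_3\in\mathbb{R}$ and consider the binary quartic form $$f(x,y)=-x^4+a_3x^3y+a_2x^2y^2+a_1xy^3+a_0y^4 .$$ Let $$b_0=\tfrac14\,(-a_1^2-a_1a_2a_3+a_0a_3^2),\quad b_1=-\tfrac14\,(4a_0+a_2^2+a_1a_3),\quad b_2=-\tfrac{a_2}{2},\quad \lambda_0=\frac{4b_2+2\sqrt{3b_1+4b_2^2}}{3}.$$ Then $f$ is negative semi-definite if and only if $\lambda_0$ is real and $$\lambda_0\ge \frac{a_3^2}{4},\qquad -\tfrac14\lambda_0^3+b_2\lambda_0^2+b_1\lambda_0+b_0\ge 0 .$$ Moreover, $f$ is negative definite if and only if $\lambda_0$ is real and $$\lambda_0> \frac{a_3^2}{4},\qquad -\tfrac14\lambda_0^3+b_2\lambda_0^2+b_1\lambda_0+b_0> 0 .$$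
   Context: A binary form $f(x,y)$ with real coefficients is negative definite (resp. negative semi-definite) if $f(x,y)<0$ (resp. $f(x,y)\le 0$) for all real $x,y$ not both zero. The quantity $\lambda_0$ is real exactly when $3b_1+4b_2^2\ge 0$. *)

theory Defs
  imports Complex_Main
begin

definition neg_definite :: "(real \<Rightarrow> real \<Rightarrow> real) \<Rightarrow> bool" where
  "neg_definite f \<longleftrightarrow> (\<forall>x y. (x, y) \<noteq> (0, 0) \<longrightarrow> f x y < 0)"

definition neg_semidefinite :: "(real \<Rightarrow> real \<Rightarrow> real) \<Rightarrow> bool" where
  "neg_semidefinite f \<longleftrightarrow> (\<forall>x y. (x, y) \<noteq> (0, 0) \<longrightarrow> f x y \<le> 0)"

end

theory Submission
  imports Defs "HOL-Real_Asymp.Real_Asymp"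
begin

(*
  Since f(x, 0) = -x^4, the form f is negative (semi)definite iff its dehomogenisation g x = f x 1
  is negative (nonpositive) everywhere.  Ferrari's decomposition writes, for every m,
    g x = - (x^2 - a3/2 x - (a2 + m)/2)^2 + (quad_a m x^2 + quad_b m x + quad_c m),
  and the discriminant of the quadratic part is -4 H(m) for the resolvent cubic H = resolvent b0 b1 b2,
  whose leading coefficient is -1/4 and whose larger critical point is l0 = resolvent_peak b1 b2.
  Sufficiency: at m = l0 the hypotheses make the quadratic part nonpositive (negative).
  Necessity: let x0 maximise g and choose m so that the square vanishes at x0.  Then the quadratic
  part is g x0 + quad_a m (x - x0)^2, so maximality gives quad_a m <= 0, i.e. m >= a3^2/4, and
  H(m) = -(m - a3^2/4) g x0 >= 0, while H(a3^2/4) <= 0.  Hence H rises somewhere to the right of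
  a3^2/4, so l0 lies there and H(l0) >= H(m); in the degenerate case m = a3^2/4 one uses
  H'(m) = -g x0 >= 0 instead.
*)

lemma neg_semidefinite_iff_dehomogenized:
  fixes f :: "real \<Rightarrow> real \<Rightarrow> real"
  assumes "even n"
    and homogeneous: "\<And>t x y. f (t * x) (t * y) = t ^ n * f x y"
    and axis: "\<And>x. x \<noteq> 0 \<Longrightarrow> f x 0 < 0"
  shows "neg_semidefinite f \<longleftrightarrow> (\<forall>x. f x 1 \<le> 0)"
proof
  assume "neg_semidefinite f"
  then show "\<forall>x. f x 1 \<le> 0" by (simp add: neg_semidefinite_def)
next
  assume dehom: "\<forall>x. f x 1 \<le> 0"
  have "f x y \<le> 0" if "y \<noteq> 0" for x y
  proof -
    have "f x y = y ^ n * f (x / y) 1" using homogeneous[of y "x / y" 1] that by simp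
    also have "\<dots> \<le> 0"
      using dehom zero_le_even_power[OF \<open>even n\<close>, of y] by (simp add: mult_nonneg_nonpos)
    finally show ?thesis .
  qed
  then show "neg_semidefinite f"
    using axis by (metis neg_semidefinite_def order_less_imp_le prod.inject)
qed

lemma neg_definite_iff_dehomogenized:
  fixes f :: "real \<Rightarrow> real \<Rightarrow> real"
  assumes "even n"
    and homogeneous: "\<And>t x y. f (t * x) (t * y) = t ^ n * f x y"
    and axis: "\<And>x. x \<noteq> 0 \<Longrightarrow> f x 0 < 0"
  shows "neg_definite f \<longleftrightarrow> (\<forall>x. f x 1 < 0)"
proof
  assume "neg_definite f"
  then show "\<forall>x. f x 1 < 0" by (simp add: neg_definite_def)
next
  assume dehom: "\<forall>x. f x 1 < 0"
  have "f x y < 0" if "y \<noteq> 0" for x y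
  proof -
    have "f x y = y ^ n * f (x / y) 1" using homogeneous[of y "x / y" 1] that by simp
    also have "\<dots> < 0" using dehom that \<open>even n\<close> by (simp add: mult_pos_neg zero_less_power_eq)
    finally show ?thesis .
  qed
  then show "neg_definite f" using axis by (metis neg_definite_def prod.inject)
qed

lemma quadratic_nonpos:
  fixes A B C x :: real
  assumes "A \<le> 0" and "B^2 \<le> 4 * A * C" and "A = 0 \<Longrightarrow> C \<le> 0"
  shows "A * x^2 + B * x + C \<le> 0"
proof (cases "A = 0")
  case True
  then show ?thesis using assms by simp
next
  case False
  have "4 * A * (A * x^2 + B * x + C) = (2 * A * x + B)^2 + (4 * A * C - B^2)"
    by (simp add: algebra_simps power2_eq_square)
  also have "\<dots> \<ge> 0" using assms by simp
  finally show ?thesis using assms(1) False by (simp add: zero_le_mult_iff)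
qed

lemma quadratic_neg:
  fixes A B C x :: real
  assumes "A < 0" and "B^2 < 4 * A * C"
  shows "A * x^2 + B * x + C < 0"
proof -
  have "4 * A * (A * x^2 + B * x + C) = (2 * A * x + B)^2 + (4 * A * C - B^2)"
    by (simp add: algebra_simps power2_eq_square)
  also have "\<dots> > 0" using assms by (simp add: add_nonneg_pos)
  finally show ?thesis using assms(1) by (simp add: zero_less_mult_iff)
qed

lemma nonneg_of_shifted_square_add_nonneg:
  fixes c d x0 :: real
  assumes "\<And>x. x \<noteq> x0 \<Longrightarrow> 0 \<le> (x + c)^2 + d"
  shows "0 \<le> d"
proof (rule ccontr)
  assume "\<not> 0 \<le> d"
  define t where "t = sqrt (- d / 2)"
  have "t \<noteq> 0" and "t^2 = - d / 2" using \<open>\<not> 0 \<le> d\<close> by (auto simp: t_def)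
  then obtain x where "x \<noteq> x0" and "(x + c)^2 = - d / 2"
    by (cases "- c + t = x0") (auto intro!: that[of "- c + t"] that[of "- c - t"])
  then show False using assms[of x] \<open>\<not> 0 \<le> d\<close> by simp
qed

lemma continuous_attains_global_max:
  fixes f :: "real \<Rightarrow> real"
  assumes "continuous_on UNIV f" and "filterlim f at_bot at_top" and "filterlim f at_bot at_bot"
  shows "\<exists>x0. \<forall>x. f x \<le> f x0"
proof -
  obtain R1 where R1: "\<And>x. x \<ge> R1 \<Longrightarrow> f x \<le> f 0"
    using assms(2) by (auto simp: filterlim_at_bot eventually_at_top_linorder)
  obtain R2 where R2: "\<And>x. x \<le> R2 \<Longrightarrow> f x \<le> f 0"
    using assms(3) by (auto simp: filterlim_at_bot eventually_at_bot_linorder)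
  define K where "K = {min R2 0..max R1 0}"
  have "compact K" and "K \<noteq> {}" by (auto simp: K_def)
  then obtain x0 where max_on_K: "\<forall>x\<in>K. f x \<le> f x0"
    using continuous_attains_sup continuous_on_subset[OF assms(1) subset_UNIV] by blast
  have "f x \<le> f x0" for x
  proof (cases "x \<in> K")
    case False
    then have "f x \<le> f 0" using R1 R2 by (force simp: K_def)
    also have "f 0 \<le> f x0" using max_on_K by (simp add: K_def)
    finally show ?thesis .
  qed (use max_on_K in blast)
  then show ?thesis by blast
qed

definition resolvent :: "real \<Rightarrow> real \<Rightarrow> real \<Rightarrow> real \<Rightarrow> real" where
  "resolvent b0 b1 b2 m = - ((1/4) * m^3) + b2 * m^2 + b1 * m + b0"

definition resolvent_deriv :: "real \<Rightarrow> real \<Rightarrow> real \<Rightarrow> real" where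
  "resolvent_deriv b1 b2 m = - (3/4) * m^2 + 2 * b2 * m + b1"

definition resolvent_peak :: "real \<Rightarrow> real \<Rightarrow> real" where
  "resolvent_peak b1 b2 = (4 * b2 + 2 * sqrt (3 * b1 + 4 * b2^2)) / 3"

lemma resolvent_deriv_eq_vertex_form:
  "resolvent_deriv b1 b2 m = (3 * b1 + 4 * b2^2) / 3 - 3/4 * (m - 4 * b2 / 3)^2"
  by (simp add: resolvent_deriv_def field_simps power2_eq_square)

lemma resolvent_deriv_peak:
  assumes "0 \<le> 3 * b1 + 4 * b2^2"
  shows "resolvent_deriv b1 b2 (resolvent_peak b1 b2) = 0"
proof -
  have "(resolvent_peak b1 b2 - 4 * b2 / 3)^2 = (2/3 * sqrt (3 * b1 + 4 * b2^2))^2"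
    by (simp add: resolvent_peak_def field_simps)
  also have "\<dots> = 4/9 * (3 * b1 + 4 * b2^2)"
    using assms by (simp add: power_mult_distrib power2_eq_square)
  finally show ?thesis by (simp add: resolvent_deriv_eq_vertex_form)
qed

lemma resolvent_deriv_nonneg_bounds:
  assumes "0 \<le> resolvent_deriv b1 b2 m"
  shows "0 \<le> 3 * b1 + 4 * b2^2"
    and "(4 * b2 - 2 * sqrt (3 * b1 + 4 * b2^2)) / 3 \<le> m"
    and "m \<le> resolvent_peak b1 b2"
proof -
  have "(3/2 * \<bar>m - 4 * b2 / 3\<bar>)^2 = 9/4 * (m - 4 * b2 / 3)^2"
    unfolding power_mult_distrib power2_abs by (simp add: power2_eq_square)
  also have "\<dots> \<le> 3 * b1 + 4 * b2^2"
    using assms by (simp add: resolvent_deriv_eq_vertex_form)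
  finally have sq_le: "(3/2 * \<bar>m - 4 * b2 / 3\<bar>)^2 \<le> 3 * b1 + 4 * b2^2" .
  then show "0 \<le> 3 * b1 + 4 * b2^2" by (rule order_trans[OF zero_le_power2])
  from sq_le have "3/2 * \<bar>m - 4 * b2 / 3\<bar> \<le> sqrt (3 * b1 + 4 * b2^2)"
    by (rule real_le_rsqrt)
  then show "(4 * b2 - 2 * sqrt (3 * b1 + 4 * b2^2)) / 3 \<le> m" "m \<le> resolvent_peak b1 b2"
    by (auto simp: resolvent_peak_def abs_le_iff field_simps)
qed

lemma resolvent_deriv_pos_bounds:
  assumes "0 < resolvent_deriv b1 b2 m"
  shows "(4 * b2 - 2 * sqrt (3 * b1 + 4 * b2^2)) / 3 < m"
    and "m < resolvent_peak b1 b2"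
proof -
  have "(3/2 * \<bar>m - 4 * b2 / 3\<bar>)^2 = 9/4 * (m - 4 * b2 / 3)^2"
    unfolding power_mult_distrib power2_abs by (simp add: power2_eq_square)
  also have "\<dots> < 3 * b1 + 4 * b2^2"
    using assms by (simp add: resolvent_deriv_eq_vertex_form)
  finally have "(3/2 * \<bar>m - 4 * b2 / 3\<bar>)^2 < 3 * b1 + 4 * b2^2" .
  then have "3/2 * \<bar>m - 4 * b2 / 3\<bar> < sqrt (3 * b1 + 4 * b2^2)"
    by (rule real_less_rsqrt)
  then show "(4 * b2 - 2 * sqrt (3 * b1 + 4 * b2^2)) / 3 < m" "m < resolvent_peak b1 b2"
    by (auto simp: resolvent_peak_def abs_less_iff field_simps)
qed

lemma resolvent_secant_midpoint:
  "resolvent b0 b1 b2 w - resolvent b0 b1 b2 u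
     = (w - u) * (resolvent_deriv b1 b2 ((u + w) / 2) - (w - u)^2 / 16)"
  by (simp add: resolvent_def resolvent_deriv_def field_simps power2_eq_square power3_eq_cube)

lemma resolvent_peak_minus:
  assumes "0 \<le> 3 * b1 + 4 * b2^2"
  shows "resolvent b0 b1 b2 (resolvent_peak b1 b2) - resolvent b0 b1 b2 m
    = 1/4 * (m - resolvent_peak b1 b2)^2 * (m - (4 * b2 - 4 * sqrt (3 * b1 + 4 * b2^2)) / 3)"
proof -
  define S where "S = sqrt (3 * b1 + 4 * b2^2)"
  have b1: "b1 = (S^2 - 4 * b2^2) / 3" using assms by (simp add: S_def)
  show ?thesis
    unfolding resolvent_def resolvent_peak_def S_def[symmetric] b1
    by (simp add: field_simps power2_eq_square power3_eq_cube)
qed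

lemma resolvent_le_peak:
  assumes "0 \<le> 3 * b1 + 4 * b2^2" and "(4 * b2 - 4 * sqrt (3 * b1 + 4 * b2^2)) / 3 \<le> m"
  shows "resolvent b0 b1 b2 m \<le> resolvent b0 b1 b2 (resolvent_peak b1 b2)"
proof -
  have "0 \<le> 1/4 * (m - resolvent_peak b1 b2)^2 * (m - (4 * b2 - 4 * sqrt (3 * b1 + 4 * b2^2)) / 3)"
    using assms(2) by simp
  then show ?thesis using resolvent_peak_minus[OF assms(1), of b0 m] by linarith
qed

lemma resolvent_less_peak:
  assumes "0 \<le> 3 * b1 + 4 * b2^2" and "(4 * b2 - 4 * sqrt (3 * b1 + 4 * b2^2)) / 3 < m"
    and "m \<noteq> resolvent_peak b1 b2"
  shows "resolvent b0 b1 b2 m < resolvent b0 b1 b2 (resolvent_peak b1 b2)"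
proof -
  have "0 < 1/4 * (m - resolvent_peak b1 b2)^2 * (m - (4 * b2 - 4 * sqrt (3 * b1 + 4 * b2^2)) / 3)"
    using assms(2,3) by simp
  then show ?thesis using resolvent_peak_minus[OF assms(1), of b0 m] by linarith
qed

lemma resolvent_le_peak_of_deriv_nonneg:
  assumes "0 \<le> resolvent_deriv b1 b2 m"
  shows "resolvent b0 b1 b2 m \<le> resolvent b0 b1 b2 (resolvent_peak b1 b2)"
proof (rule resolvent_le_peak)
  note bounds = resolvent_deriv_nonneg_bounds[OF assms]
  show "0 \<le> 3 * b1 + 4 * b2^2" by (fact bounds(1))
  show "(4 * b2 - 4 * sqrt (3 * b1 + 4 * b2^2)) / 3 \<le> m"
    using bounds(2) real_sqrt_ge_zero[OF bounds(1)] unfolding diff_divide_distrib by linarith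
qed

lemma resolvent_less_peak_of_deriv_pos:
  assumes "0 < resolvent_deriv b1 b2 m"
  shows "resolvent b0 b1 b2 m < resolvent b0 b1 b2 (resolvent_peak b1 b2)"
proof (rule resolvent_less_peak)
  note bounds = resolvent_deriv_nonneg_bounds(1)[OF less_imp_le[OF assms]]
    resolvent_deriv_pos_bounds[OF assms]
  show "0 \<le> 3 * b1 + 4 * b2^2" by (fact bounds(1))
  show "(4 * b2 - 4 * sqrt (3 * b1 + 4 * b2^2)) / 3 < m"
    using bounds(2) real_sqrt_ge_zero[OF bounds(1)] unfolding diff_divide_distrib by linarith
  show "m \<noteq> resolvent_peak b1 b2" using bounds(3) by simp
qed

lemma resolvent_le_peak_of_le:
  assumes "u < w" and "resolvent b0 b1 b2 u \<le> resolvent b0 b1 b2 w"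
  shows "0 \<le> 3 * b1 + 4 * b2^2" and "u < resolvent_peak b1 b2"
    and "resolvent b0 b1 b2 w \<le> resolvent b0 b1 b2 (resolvent_peak b1 b2)"
proof -
  \<comment> \<open>the midpoint plays the role of the mean-value point, with a strictly positive slope\<close>
  define mid where "mid = (u + w) / 2"
  have "0 \<le> (w - u) * (resolvent_deriv b1 b2 mid - (w - u)^2 / 16)"
    using resolvent_secant_midpoint[of b0 b1 b2 w u] assms(2) by (simp add: mid_def)
  then have "(w - u)^2 / 16 \<le> resolvent_deriv b1 b2 mid"
    using assms(1) by (simp add: zero_le_mult_iff)
  moreover have "0 < (w - u)^2 / 16" using assms(1) by simp
  ultimately have deriv_pos: "0 < resolvent_deriv b1 b2 mid" by linarith
  note mid_bounds = resolvent_deriv_pos_bounds[OF deriv_pos]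
  have "u < mid" and "mid < w" using assms(1) by (simp_all add: mid_def)
  show D: "0 \<le> 3 * b1 + 4 * b2^2"
    using resolvent_deriv_nonneg_bounds(1) deriv_pos less_imp_le by blast
  show "u < resolvent_peak b1 b2" using mid_bounds(2) \<open>u < mid\<close> by linarith
  show "resolvent b0 b1 b2 w \<le> resolvent b0 b1 b2 (resolvent_peak b1 b2)"
  proof (rule resolvent_le_peak[OF D])
    show "(4 * b2 - 4 * sqrt (3 * b1 + 4 * b2^2)) / 3 \<le> w"
      using mid_bounds(1) \<open>mid < w\<close> real_sqrt_ge_zero[OF D]
      unfolding diff_divide_distrib by linarith
  qed
qed

locale neg_monic_quartic =
  fixes a0 a1 a2 a3 :: real
begin

definition g :: "real \<Rightarrow> real" where
  "g x = - (x^4) + a3 * x^3 + a2 * x^2 + a1 * x + a0"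

definition b0 :: real where "b0 = (1/4) * (- (a1^2) - a1 * a2 * a3 + a0 * a3^2)"
definition b1 :: real where "b1 = - (1/4) * (4 * a0 + a2^2 + a1 * a3)"
definition b2 :: real where "b2 = - (a2 / 2)"

definition quad_a :: "real \<Rightarrow> real" where "quad_a m = a3^2 / 4 - m"
definition quad_b :: "real \<Rightarrow> real" where "quad_b m = a1 + a3 * (a2 + m) / 2"
definition quad_c :: "real \<Rightarrow> real" where "quad_c m = a0 + ((a2 + m) / 2)^2"

lemma g_eq_neg_square_plus_quad:
  "g x = - ((x^2 - a3 / 2 * x - (a2 + m) / 2)^2) + (quad_a m * x^2 + quad_b m * x + quad_c m)"
  by (simp add: g_def quad_a_def quad_b_def quad_c_def field_simps
      power2_eq_square power3_eq_cube power4_eq_xxxx)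

lemma g_le_quad: "g x \<le> quad_a m * x^2 + quad_b m * x + quad_c m"
  using g_eq_neg_square_plus_quad[of x m] zero_le_power2[of "x^2 - a3 / 2 * x - (a2 + m) / 2"]
  by linarith

lemma quad_discriminant_eq_resolvent:
  "4 * quad_a m * quad_c m - (quad_b m)^2 = 4 * resolvent b0 b1 b2 m"
  by (simp add: resolvent_def b0_def b1_def b2_def quad_a_def quad_b_def quad_c_def field_simps
      power2_eq_square power3_eq_cube)

lemma resolvent_deriv_eq_quad:
  "resolvent_deriv b1 b2 m = quad_a m * (a2 + m) / 2 - quad_c m - quad_b m * a3 / 4"
  by (simp add: resolvent_deriv_def b1_def b2_def quad_a_def quad_b_def quad_c_def field_simps
      power2_eq_square)

lemma resolvent_at_a3_nonpos: "resolvent b0 b1 b2 (a3^2 / 4) \<le> 0"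
proof -
  have "4 * resolvent b0 b1 b2 (a3^2 / 4) = - ((quad_b (a3^2 / 4))^2)"
    using quad_discriminant_eq_resolvent[of "a3^2 / 4"] by (simp add: quad_a_def)
  then show ?thesis using zero_le_power2[of "quad_b (a3^2 / 4)"] by linarith
qed

lemma g_nonpos_of_resolvent:
  assumes D: "0 \<le> 3 * b1 + 4 * b2^2"
    and peak: "a3^2 / 4 \<le> resolvent_peak b1 b2"
    and "0 \<le> resolvent b0 b1 b2 (resolvent_peak b1 b2)"
  shows "g x \<le> 0"
proof -
  define m where "m = resolvent_peak b1 b2"
  have disc: "(quad_b m)^2 \<le> 4 * quad_a m * quad_c m"
    using quad_discriminant_eq_resolvent[of m] assms(3) by (simp add: m_def)
  have "quad_a m * x^2 + quad_b m * x + quad_c m \<le> 0"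
  proof (rule quadratic_nonpos[OF _ disc])
    show "quad_a m \<le> 0" using peak by (simp add: quad_a_def m_def)
    assume "quad_a m = 0"
    with disc have "quad_b m = 0" by simp
    then show "quad_c m \<le> 0"
      using resolvent_deriv_eq_quad[of m] resolvent_deriv_peak[OF D] \<open>quad_a m = 0\<close>
      by (simp add: m_def)
  qed
  with g_le_quad show ?thesis by (rule order_trans)
qed

lemma g_neg_of_resolvent:
  assumes "a3^2 / 4 < resolvent_peak b1 b2"
    and "0 < resolvent b0 b1 b2 (resolvent_peak b1 b2)"
  shows "g x < 0"
proof -
  define m where "m = resolvent_peak b1 b2"
  have "quad_a m * x^2 + quad_b m * x + quad_c m < 0"
  proof (rule quadratic_neg)
    show "quad_a m < 0" using assms(1) by (simp add: quad_a_def m_def)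
    show "(quad_b m)^2 < 4 * quad_a m * quad_c m"
      using quad_discriminant_eq_resolvent[of m] assms(2) by (simp add: m_def)
  qed
  with g_le_quad show ?thesis by (rule order_le_less_trans)
qed

lemma g_attains_max: "\<exists>x0. \<forall>x. g x \<le> g x0"
  unfolding g_def by (rule continuous_attains_global_max) (intro continuous_intros, real_asymp+)

lemma g_deriv_zero_at_max:
  assumes "\<forall>x. g x \<le> g x0"
  shows "- 4 * x0^3 + 3 * a3 * x0^2 + 2 * a2 * x0 + a1 = 0"
proof (rule DERIV_local_max[OF _ zero_less_one])
  show "(g has_real_derivative (- 4 * x0^3 + 3 * a3 * x0^2 + 2 * a2 * x0 + a1)) (at x0)"
    unfolding g_def by (auto intro!: derivative_eq_intros simp: power2_eq_square power3_eq_cube)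
qed (use assms in blast)

lemma quad_at_critical_point:
  assumes "- 4 * x0^3 + 3 * a3 * x0^2 + 2 * a2 * x0 + a1 = 0"
    and "m = 2 * x0^2 - a3 * x0 - a2"
  shows "quad_b m = - 2 * quad_a m * x0"
    and "quad_c m = g x0 + quad_a m * x0^2"
    and "x^2 - a3 / 2 * x - (a2 + m) / 2 = (x - x0) * (x + x0 - a3 / 2)"
proof -
  have a1: "a1 = 4 * x0^3 - 3 * a3 * x0^2 - 2 * a2 * x0" using assms(1) by simp
  show "quad_b m = - 2 * quad_a m * x0" "quad_c m = g x0 + quad_a m * x0^2"
    unfolding quad_a_def quad_b_def quad_c_def g_def assms(2)
    by (simp_all add: a1 field_simps power2_eq_square power3_eq_cube power4_eq_xxxx)
  show "x^2 - a3 / 2 * x - (a2 + m) / 2 = (x - x0) * (x + x0 - a3 / 2)"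
    unfolding assms(2) by (simp add: field_simps power2_eq_square)
qed

lemma resolvent_certificate_at_max:
  assumes max: "\<forall>x. g x \<le> g x0"
  obtains m where "a3^2 / 4 \<le> m"
    and "resolvent b0 b1 b2 m = (m - a3^2 / 4) * - g x0"
    and "m = a3^2 / 4 \<Longrightarrow> resolvent_deriv b1 b2 m = - g x0"
proof -
  define m where "m = 2 * x0^2 - a3 * x0 - a2"
  note at_crit = quad_at_critical_point[OF g_deriv_zero_at_max[OF max] m_def]
  have g_eq: "g x = g x0 - (x - x0)^2 * ((x + (x0 - a3 / 2))^2 + - quad_a m)" for x
  proof -
    have "g x = - (((x - x0) * (x + x0 - a3 / 2))^2)
        + (quad_a m * x^2 + - 2 * quad_a m * x0 * x + (g x0 + quad_a m * x0^2))"
      by (rule g_eq_neg_square_plus_quad[of x m, unfolded at_crit(1,2) at_crit(3)[of x]])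
    also have "\<dots> = g x0 - (x - x0)^2 * ((x + (x0 - a3 / 2))^2 + - quad_a m)"
      by algebra
    finally show ?thesis .
  qed
  have "0 \<le> - quad_a m"
  proof (rule nonneg_of_shifted_square_add_nonneg)
    fix x assume "x \<noteq> x0"
    have "0 \<le> (x - x0)^2 * ((x + (x0 - a3 / 2))^2 + - quad_a m)"
      using g_eq[of x] max[rule_format, of x] by linarith
    then show "0 \<le> (x + (x0 - a3 / 2))^2 + - quad_a m"
      using \<open>x \<noteq> x0\<close> by (simp add: zero_le_mult_iff)
  qed
  show ?thesis
  proof (rule that)
    show "a3^2 / 4 \<le> m" using \<open>0 \<le> - quad_a m\<close> by (simp add: quad_a_def)
    have "4 * resolvent b0 b1 b2 m
        = 4 * quad_a m * (g x0 + quad_a m * x0^2) - (- 2 * quad_a m * x0)^2"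
      using quad_discriminant_eq_resolvent[of m] unfolding at_crit(1,2) by simp
    also have "\<dots> = 4 * quad_a m * g x0" by algebra
    finally show "resolvent b0 b1 b2 m = (m - a3^2 / 4) * - g x0"
      by (simp add: quad_a_def algebra_simps)
    assume "m = a3^2 / 4"
    then have "quad_a m = 0" by (simp add: quad_a_def)
    then show "resolvent_deriv b1 b2 m = - g x0"
      using resolvent_deriv_eq_quad[of m] at_crit(1,2) by simp
  qed
qed

lemma resolvent_conditions_of_max:
  assumes max: "\<forall>x. g x \<le> g x0" and "g x0 \<le> 0"
  shows "(0 \<le> 3 * b1 + 4 * b2^2 \<and> a3^2 / 4 \<le> resolvent_peak b1 b2
      \<and> 0 \<le> resolvent b0 b1 b2 (resolvent_peak b1 b2))
    \<and> (g x0 < 0 \<longrightarrow> a3^2 / 4 < resolvent_peak b1 b2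
      \<and> 0 < resolvent b0 b1 b2 (resolvent_peak b1 b2))"
proof -
  obtain m where m: "a3^2 / 4 \<le> m"
    and resolvent_m: "resolvent b0 b1 b2 m = (m - a3^2 / 4) * - g x0"
    and deriv_m: "m = a3^2 / 4 \<Longrightarrow> resolvent_deriv b1 b2 m = - g x0"
    using resolvent_certificate_at_max[OF max] by blast
  have resolvent_m_nonneg: "0 \<le> resolvent b0 b1 b2 m"
    using resolvent_m m assms(2) by (simp add: mult_nonneg_nonpos)
  show ?thesis
  proof (cases "m = a3^2 / 4")
    case True
    then have "resolvent_deriv b1 b2 m = - g x0" by (rule deriv_m)
    then have deriv: "0 \<le> resolvent_deriv b1 b2 m" using assms(2) by simp
    have strict: "m < resolvent_peak b1 b2 \<and> 0 < resolvent b0 b1 b2 (resolvent_peak b1 b2)"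
      if "g x0 < 0"
    proof -
      have "0 < resolvent_deriv b1 b2 m"
        using \<open>resolvent_deriv b1 b2 m = - g x0\<close> that by simp
      then show ?thesis
        using resolvent_deriv_pos_bounds(2) resolvent_less_peak_of_deriv_pos resolvent_m_nonneg
        by (meson order_le_less_trans)
    qed
    show ?thesis
      using resolvent_deriv_nonneg_bounds(1,3)[OF deriv] resolvent_le_peak_of_deriv_nonneg[OF deriv]
        resolvent_m_nonneg strict True
      by (meson order_trans)
  next
    case False
    with m have "a3^2 / 4 < m" by simp
    have "resolvent b0 b1 b2 (a3^2 / 4) \<le> resolvent b0 b1 b2 m"
      using resolvent_at_a3_nonpos resolvent_m_nonneg by linarith
    note le_peak = resolvent_le_peak_of_le[OF \<open>a3^2 / 4 < m\<close> this]
    have "0 < resolvent b0 b1 b2 m" if "g x0 < 0"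
      using resolvent_m \<open>a3^2 / 4 < m\<close> that by (simp add: mult_pos_neg)
    then show ?thesis
      using le_peak resolvent_m_nonneg by (meson order_trans order_less_le_trans order_less_imp_le)
  qed
qed

lemma g_nonpos_iff_resolvent:
  "(\<forall>x. g x \<le> 0) \<longleftrightarrow> 0 \<le> 3 * b1 + 4 * b2^2 \<and> a3^2 / 4 \<le> resolvent_peak b1 b2
      \<and> 0 \<le> resolvent b0 b1 b2 (resolvent_peak b1 b2)"
proof
  assume "\<forall>x. g x \<le> 0"
  moreover obtain x0 where "\<forall>x. g x \<le> g x0" using g_attains_max by blast
  ultimately show "0 \<le> 3 * b1 + 4 * b2^2 \<and> a3^2 / 4 \<le> resolvent_peak b1 b2
      \<and> 0 \<le> resolvent b0 b1 b2 (resolvent_peak b1 b2)"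
    using resolvent_conditions_of_max by blast
qed (use g_nonpos_of_resolvent in blast)

lemma g_neg_iff_resolvent:
  "(\<forall>x. g x < 0) \<longleftrightarrow> 0 \<le> 3 * b1 + 4 * b2^2 \<and> a3^2 / 4 < resolvent_peak b1 b2
      \<and> 0 < resolvent b0 b1 b2 (resolvent_peak b1 b2)"
proof
  assume "\<forall>x. g x < 0"
  moreover obtain x0 where "\<forall>x. g x \<le> g x0" using g_attains_max by blast
  ultimately show "0 \<le> 3 * b1 + 4 * b2^2 \<and> a3^2 / 4 < resolvent_peak b1 b2
      \<and> 0 < resolvent b0 b1 b2 (resolvent_peak b1 b2)"
    using resolvent_conditions_of_max less_imp_le by blast
qed (use g_neg_of_resolvent in blast)

end

theorem corollary2:
  fixes a0 a1 a2 a3 b0 b1 b2 l0 :: real and f :: "real \<Rightarrow> real \<Rightarrow> real"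
  assumes f_def: "f = (\<lambda>x y. - (x^4) + a3 * x^3 * y + a2 * x^2 * y^2 + a1 * x * y^3 + a0 * y^4)"
    and b0_def: "b0 = (1/4) * (- (a1^2) - a1 * a2 * a3 + a0 * a3^2)"
    and b1_def: "b1 = - (1/4) * (4 * a0 + a2^2 + a1 * a3)"
    and b2_def: "b2 = - (a2 / 2)"
    and l0_def: "l0 = (4 * b2 + 2 * sqrt (3 * b1 + 4 * b2^2)) / 3"
  shows "(neg_semidefinite f \<longleftrightarrow>
            3 * b1 + 4 * b2^2 \<ge> 0 \<and> l0 \<ge> a3^2 / 4 \<and>
            - ((1/4) * l0^3) + b2 * l0^2 + b1 * l0 + b0 \<ge> 0)
       \<and> (neg_definite f \<longleftrightarrow>
            3 * b1 + 4 * b2^2 \<ge> 0 \<and> l0 > a3^2 / 4 \<and>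
            - ((1/4) * l0^3) + b2 * l0^2 + b1 * l0 + b0 > 0)"
proof -
  interpret q: neg_monic_quartic a0 a1 a2 a3 .
  have b: "q.b0 = b0" "q.b1 = b1" "q.b2 = b2"
    using b0_def b1_def b2_def by (simp_all add: q.b0_def q.b1_def q.b2_def)
  have l0: "l0 = resolvent_peak b1 b2" using l0_def by (simp add: resolvent_peak_def)
  have homogeneous: "f (t * x) (t * y) = t ^ 4 * f x y" for t x y
    unfolding f_def by algebra
  have axis: "f x 0 < 0" if "x \<noteq> 0" for x using that by (simp add: f_def)
  have dehom: "f x 1 = q.g x" for x by (simp add: f_def q.g_def)
  have "neg_semidefinite f \<longleftrightarrow> (\<forall>x. q.g x \<le> 0)"
    using neg_semidefinite_iff_dehomogenized[of 4 f, OF _ homogeneous axis] by (simp add: dehom)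
  moreover have "neg_definite f \<longleftrightarrow> (\<forall>x. q.g x < 0)"
    using neg_definite_iff_dehomogenized[of 4 f, OF _ homogeneous axis] by (simp add: dehom)
  ultimately show ?thesis
    using q.g_nonpos_iff_resolvent q.g_neg_iff_resolvent unfolding b l0 resolvent_def by simp
qed

end
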